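(* Let $L$ spin-orbitals be indexed by $\{1,\dots,L\}$ and let $N_{\mathrm{occ}}$ be an integer with $1\le N_{\mathrm{occ}}<L$. Call an operator an o-operator if it is a creation or annihilation operator $\hat a^\dagger_p$ or $\hat a_p$ with $p\in\{1,\dots,N_{\mathrm{occ}}\}$, and a v-operator if $p\in\{N_{\mathrm{occ}}+1,\dots,L\}$. Let $n_o,n_v\geq 0$ and consider $n_o$ o-creation operators, $n_o$ o-annihilation operators, $n_v$ v-creation operators and $n_v$ v-annihilation operators, all regarded as $2n_o+2n_v$ distinct objects. Call an ordering of these operators into a chain of length $2n_o+2n_v$ admissible if both of the following hold: (a) the word obtained by reading the o-operators of the chain from left to right and replacing each o-creation operator by "(" and each o-annihilation operator by ")" is a Dyck word; (b) the word obtained by reading the v-operators of the chain from left to right and replacing each v-annihilation operator by "(" and each v-creation operator by ")" is a Dyck word. Then the number of admissible orderings is $$C_{n_o}\,C_{n_v}\,\binom{2n_o+2n_v}{2n_o}\,(n_o!)^2\,(n_v!)^2,$$ where $C_m=\frac{1}{m+1}\binom{2m}{m}$ is the $m$-th Catalan number.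
   Context: A Dyck word is a finite word over $\{(,)\}$ with as many opening as closing brackets, every prefix of which contains at least as many opening as closing brackets (the empty word is a Dyck word). The reference state is the Fermi vacuum, the Slater determinant in which spin-orbitals $1,\dots,N_{\mathrm{occ}}$ are occupied and the others are empty; the pair of words in (a),(b) is the paper's "split-$\mathcal{L}_2$ translation", and the paper calls admissible chains those whose expectation value relatively to the Fermi vacuum is "possibly different from zero", since otherwise that expectation value vanishes. *)

theory Defs
  imports Main
begin

text \<open>Brackets: True stands for an opening bracket "(", False for a closing bracket ")".\<close>

definition dyck_word :: "bool list \<Rightarrow> bool" where
  "dyck_word w \<longleftrightarrow>
     length (filter (\<lambda>b. b) w) = length (filter Not w) \<and>
     (\<forall>k \<le> length w. length (filter Not (take k w)) \<le> length (filter (\<lambda>b. b) (take k w)))"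

datatype opkind = OCre | OAnn | VCre | VAnn

text \<open>The 2 n_o + 2 n_v distinct operators: a kind together with an index distinguishing
  operators of the same kind.\<close>
definition operators :: "nat \<Rightarrow> nat \<Rightarrow> (opkind \<times> nat) set" where
  "operators no nv =
     {(k, i). (k = OCre \<or> k = OAnn) \<and> i < no} \<union> {(k, i). (k = VCre \<or> k = VAnn) \<and> i < nv}"

definition o_word :: "(opkind \<times> nat) list \<Rightarrow> bool list" where
  "o_word c = map (\<lambda>x. fst x = OCre) (filter (\<lambda>x. fst x = OCre \<or> fst x = OAnn) c)"

definition v_word :: "(opkind \<times> nat) list \<Rightarrow> bool list" where
  "v_word c = map (\<lambda>x. fst x = VAnn) (filter (\<lambda>x. fst x = VCre \<or> fst x = VAnn) c)"

definition admissible :: "(opkind \<times> nat) list \<Rightarrow> bool" where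
  "admissible c \<longleftrightarrow> dyck_word (o_word c) \<and> dyck_word (v_word c)"

definition orderings :: "nat \<Rightarrow> nat \<Rightarrow> (opkind \<times> nat) list set" where
  "orderings no nv = {c. distinct c \<and> set c = operators no nv}"

definition catalan :: "nat \<Rightarrow> nat" where
  "catalan m = ((2 * m) choose m) div (m + 1)"

end

(* A chain is determined by three independent pieces of data: the pattern of o- and
   v-positions (a binomial coefficient), the order of the o-operators, and the order of the
   v-operators. Admissibility only constrains the two orders, and each of them is a sequence of
   n creation and n annihilation operators whose bracket word must be a Dyck word: Catalan many
   bracket words, counted through the ballot recursion, times n!^2 labellings of the brackets. *)

theory Submission
  imports Defs "HOL-Combinatorics.Multiset_Permutations"
begin

abbreviation opens :: "bool list \<Rightarrow> nat" where
  "opens w \<equiv> length (filter (\<lambda>b. b) w)"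

abbreviation closes :: "bool list \<Rightarrow> nat" where
  "closes w \<equiv> length (filter Not w)"

fun interleave :: "bool list \<Rightarrow> 'a list \<Rightarrow> 'a list \<Rightarrow> 'a list" where
  "interleave [] xs ys = []"
| "interleave (b # p) xs ys =
     (if b then hd xs # interleave p (tl xs) ys else hd ys # interleave p xs (tl ys))"

lemma interleave_map_filter:
  "interleave (map P c) (filter P c) (filter (\<lambda>x. \<not> P x) c) = c"
  by (induction c) auto

lemma map_filter_interleave:
  assumes "opens p = length xs" "closes p = length ys"
    and "\<forall>x\<in>set xs. P x" "\<forall>y\<in>set ys. \<not> P y"
  shows "map P (interleave p xs ys) = p \<and> filter P (interleave p xs ys) = xs
    \<and> filter (\<lambda>x. \<not> P x) (interleave p xs ys) = ys"
  using assms
proof (induction p arbitrary: xs ys)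
  case (Cons b p)
  show ?case
  proof (cases b)
    case True
    with Cons.prems obtain x xs' where "xs = x # xs'" by (cases xs) auto
    with True Cons.prems Cons.IH[of xs' ys] show ?thesis by auto
  next
    case False
    with Cons.prems obtain y ys' where "ys = y # ys'" by (cases ys) auto
    with False Cons.prems Cons.IH[of xs ys'] show ?thesis by auto
  qed
qed simp

lemma distinct_iff_distinct_filter_compl:
  "distinct c \<longleftrightarrow> distinct (filter P c) \<and> distinct (filter (\<lambda>x. \<not> P x) c)"
proof (induction c)
  case (Cons x c)
  show ?case
  proof (cases "P x")
    case True
    then have "x \<in> set c \<longleftrightarrow> x \<in> set (filter P c)" by simp
    with True Cons.IH show ?thesis
      by (simp only: filter.simps not_True_eq_False if_True if_False distinct.simps) blast
  next
    case False
    then have "x \<in> set c \<longleftrightarrow> x \<in> set (filter (\<lambda>x. \<not> P x) c)" by simp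
    with False Cons.IH show ?thesis
      by (simp only: filter.simps not_False_eq_True if_True if_False distinct.simps) blast
  qed
qed simp

lemma card_permutations_of_set_split:
  assumes "finite S"
  shows "card {c \<in> permutations_of_set S.
              R (map P c) \<and> Q1 (filter P c) \<and> Q2 (filter (\<lambda>x. \<not> P x) c)}
    = card {p. opens p = card {x \<in> S. P x} \<and> closes p = card {x \<in> S. \<not> P x} \<and> R p}
      * card {xs \<in> permutations_of_set {x \<in> S. P x}. Q1 xs}
      * card {ys \<in> permutations_of_set {x \<in> S. \<not> P x}. Q2 ys}"
    (is "card ?C = card ?W * card ?X * card ?Y")
proof -
  define split where "split c = (map P c, filter P c, filter (\<lambda>x. \<not> P x) c)" for c
  have interleave_parts: "split (interleave p xs ys) = (p, xs, ys) \<and> interleave p xs ys \<in> ?C"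
    if p: "p \<in> ?W" and xs: "xs \<in> ?X" and ys: "ys \<in> ?Y" for p xs ys
  proof -
    from that have parts: "map P (interleave p xs ys) = p \<and> filter P (interleave p xs ys) = xs
        \<and> filter (\<lambda>x. \<not> P x) (interleave p xs ys) = ys"
      by (intro map_filter_interleave)
        (auto simp: length_finite_permutations_of_set permutations_of_set_def)
    have "interleave p xs ys \<in> permutations_of_set S"
    proof
      show "distinct (interleave p xs ys)"
      proof (rule distinct_iff_distinct_filter_compl[THEN iffD2])
        show "distinct (filter P (interleave p xs ys))
            \<and> distinct (filter (\<lambda>x. \<not> P x) (interleave p xs ys))"
          using parts xs ys by (simp add: permutations_of_set_def)
      qed
      have "set (interleave p xs ys)
          = set (filter P (interleave p xs ys)) \<union> set (filter (\<lambda>x. \<not> P x) (interleave p xs ys))"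
        by auto
      also have "\<dots> = set xs \<union> set ys"
        using parts by simp
      finally have "set (interleave p xs ys) = set xs \<union> set ys" .
      with xs ys show "set (interleave p xs ys) = S"
        by (auto simp: permutations_of_set_def)
    qed
    with parts p xs ys show ?thesis
      by (simp add: split_def)
  qed
  have "bij_betw split ?C (?W \<times> ?X \<times> ?Y)"
  proof (rule bij_betw_byWitness[where f' = "\<lambda>(p, xs, ys). interleave p xs ys"])
    show "\<forall>c\<in>?C. (\<lambda>(p, xs, ys). interleave p xs ys) (split c) = c"
      by (simp add: split_def interleave_map_filter)
    show "split ` ?C \<subseteq> ?W \<times> ?X \<times> ?Y"
    proof (rule image_subsetI)
      fix c assume c: "c \<in> ?C"
      then have "filter P c \<in> permutations_of_set {x \<in> S. P x}"
        and "filter (\<lambda>x. \<not> P x) c \<in> permutations_of_set {x \<in> S. \<not> P x}"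
        by (auto simp: permutations_of_set_def)
      with c show "split c \<in> ?W \<times> ?X \<times> ?Y"
        by (simp add: split_def comp_def length_finite_permutations_of_set)
    qed
    show "\<forall>t\<in>?W \<times> ?X \<times> ?Y. split ((\<lambda>(p, xs, ys). interleave p xs ys) t) = t"
      and "(\<lambda>(p, xs, ys). interleave p xs ys) ` (?W \<times> ?X \<times> ?Y) \<subseteq> ?C"
      using interleave_parts by auto
  qed
  then have "card ?C = card ?W * (card ?X * card ?Y)"
    by (simp add: bij_betw_same_card card_cartesian_product)
  then show ?thesis
    by (simp add: mult.assoc)
qed

lemma card_bool_lists_count:
  "card {p. opens p = n \<and> closes p = m} = (n + m) choose n"
proof -
  have parts: "{x \<in> {..<n + m}. x < n} = {..<n}" "{x \<in> {..<n + m}. \<not> x < n} = {n..<n + m}"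
    by auto
  have "fact (n + m) = card {p. opens p = n \<and> closes p = m} * fact n * (fact m :: nat)"
    using card_permutations_of_set_split[of "{..<n + m}" "\<lambda>_. True" "\<lambda>x. x < n"
        "\<lambda>_. True" "\<lambda>_. True"]
    unfolding parts by simp
  moreover have "fact (n + m) = fact n * fact m * ((n + m) choose n :: nat)"
    using binomial_fact_lemma[of n "n + m"] by simp
  ultimately show ?thesis
    by (simp add: ac_simps)
qed

definition ballot :: "bool list \<Rightarrow> bool" where
  "ballot w \<longleftrightarrow> (\<forall>k \<le> length w. closes (take k w) \<le> opens (take k w))"

definition ballot_words :: "nat \<Rightarrow> nat \<Rightarrow> bool list set" where
  "ballot_words a b = {w. opens w = a \<and> closes w = b \<and> ballot w}"

lemma dyck_word_iff_ballot: "dyck_word w \<longleftrightarrow> opens w = closes w \<and> ballot w"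
  unfolding dyck_word_def ballot_def by simp

lemma ballot_snoc: "ballot (w @ [b]) \<longleftrightarrow> ballot w \<and> closes (w @ [b]) \<le> opens (w @ [b])"
proof -
  have "ballot (w @ [b]) \<longleftrightarrow>
      (\<forall>k \<le> length w. closes (take k w) \<le> opens (take k w)) \<and> closes (w @ [b]) \<le> opens (w @ [b])"
    unfolding ballot_def by (auto simp: le_Suc_eq take_append simp del: filter_append)
  then show ?thesis
    by (simp add: ballot_def)
qed

lemma ballot_closes_le_opens: "ballot w \<Longrightarrow> closes w \<le> opens w"
  unfolding ballot_def by (metis order_refl take_all)

lemma finite_ballot_words: "finite (ballot_words a b)"
proof (rule finite_subset)
  show "ballot_words a b \<subseteq> {w. set w \<subseteq> UNIV \<and> length w = a + b}"
    unfolding ballot_words_def using sum_length_filter_compl[of "\<lambda>b. b"] by auto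
  show "finite {w. set w \<subseteq> (UNIV :: bool set) \<and> length w = a + b}"
    by (rule finite_lists_length_eq) simp
qed

lemma ballot_words_eq_empty: "a < b \<Longrightarrow> ballot_words a b = {}"
  by (auto simp: ballot_words_def dest: ballot_closes_le_opens)

lemma ballot_words_0: "ballot_words a 0 = {replicate a True}"
proof
  show "ballot_words a 0 \<subseteq> {replicate a True}"
  proof
    fix w assume "w \<in> ballot_words a 0"
    then have "closes w = 0" "opens w = a"
      by (auto simp: ballot_words_def)
    then have "\<forall>x\<in>set w. x" "length w = a"
      using sum_length_filter_compl[of "\<lambda>b. b" w] by (auto simp: filter_empty_conv)
    then show "w \<in> {replicate a True}"
      by (auto intro!: replicate_eqI)
  qed
qed (auto simp: ballot_words_def ballot_def)

lemma ballot_words_Suc_Suc: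
  assumes "b \<le> a"
  shows "ballot_words (Suc a) (Suc b)
    = (\<lambda>w. w @ [True]) ` ballot_words a (Suc b) \<union> (\<lambda>w. w @ [False]) ` ballot_words (Suc a) b"
proof
  show "ballot_words (Suc a) (Suc b)
      \<subseteq> (\<lambda>w. w @ [True]) ` ballot_words a (Suc b) \<union> (\<lambda>w. w @ [False]) ` ballot_words (Suc a) b"
  proof
    fix w assume w: "w \<in> ballot_words (Suc a) (Suc b)"
    then have "w \<noteq> []"
      by (auto simp: ballot_words_def)
    then obtain v x where "w = v @ [x]"
      by (metis rev_exhaust)
    with w ballot_snoc[of v x]
    show "w \<in> (\<lambda>w. w @ [True]) ` ballot_words a (Suc b) \<union> (\<lambda>w. w @ [False]) ` ballot_words (Suc a) b"
      by (cases x) (auto simp: ballot_words_def)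
  qed
qed (use assms in \<open>auto simp: ballot_words_def ballot_snoc\<close>)

lemma card_ballot_words_Suc_Suc:
  assumes "b \<le> a"
  shows "card (ballot_words (Suc a) (Suc b))
    = card (ballot_words a (Suc b)) + card (ballot_words (Suc a) b)"
proof -
  have "card (ballot_words (Suc a) (Suc b))
      = card ((\<lambda>w. w @ [True]) ` ballot_words a (Suc b))
        + card ((\<lambda>w. w @ [False]) ` ballot_words (Suc a) b)"
    unfolding ballot_words_Suc_Suc[OF assms]
    by (rule card_Un_disjoint) (auto simp: finite_ballot_words)
  then show ?thesis
    by (simp add: card_image inj_on_def)
qed

text \<open>The ballot numbers \<open>(a + b + 1 choose b + 1) - (a + b + 1 choose b)\<close>, stated without
  truncated subtraction.\<close>

lemma card_ballot_words_Suc: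
  "b \<le> a \<Longrightarrow> card (ballot_words a (Suc b)) + ((a + Suc b) choose b) = (a + Suc b) choose Suc b"
proof (induction "a + b" arbitrary: a b rule: less_induct)
  case less
  show ?case
  proof (cases "b = a")
    case True
    then show ?thesis
      using binomial_symmetric[of a "a + Suc a"] by (simp add: ballot_words_eq_empty)
  next
    case False
    with less.prems obtain a' where a: "a = Suc a'" "b \<le> a'"
      by (cases a) auto
    have IH1: "card (ballot_words a' (Suc b)) + ((a' + Suc b) choose b) = (a' + Suc b) choose Suc b"
      using less.hyps[of a' b] a by simp
    have rec:
      "card (ballot_words a (Suc b)) = card (ballot_words a' (Suc b)) + card (ballot_words a b)"
      using card_ballot_words_Suc_Suc[of b a'] a by simp
    show ?thesis
    proof (cases b)
      case 0
      with rec IH1 a show ?thesis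
        by (simp add: ballot_words_0)
    next
      case (Suc b')
      have IH2: "card (ballot_words a b) + ((a + b) choose b') = (a + b) choose b"
        using less.hyps[of a b'] a Suc by simp
      have "(a + Suc b) choose Suc b = ((a + b) choose b) + ((a + b) choose Suc b)"
        and "(a + Suc b) choose b = ((a + b) choose b') + ((a + b) choose b)"
        using Suc by simp_all
      with rec IH1 IH2 a show ?thesis
        by simp
    qed
  qed
qed

lemma card_ballot_words_diag: "card (ballot_words m m) = catalan m"
proof -
  have "card (ballot_words m m) * (m + 1) = (2 * m) choose m"
  proof (cases m)
    case 0
    then show ?thesis
      by (simp add: ballot_words_0)
  next
    case (Suc k)
    define n where "n = 2 * m"
    have ballot: "card (ballot_words m m) + (n choose k) = n choose m"
      using card_ballot_words_Suc[of k m] by (simp only: n_def Suc mult_2 le_SucI order_refl)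
    have "(m + 1) * (n choose k) = n * ((n - 1) choose k)"
      using binomial_absorb_comp[of n k] by (simp add: n_def Suc)
    also have "\<dots> = m * (n choose m)"
      using binomial_absorption[of k n] by (simp add: Suc)
    finally have absorb: "(m + 1) * (n choose k) = m * (n choose m)" .
    have "c * (m + 1) = C\<^sub>1"
      if "c + C\<^sub>0 = C\<^sub>1" "(m + 1) * C\<^sub>0 = m * C\<^sub>1" for c C\<^sub>0 C\<^sub>1 :: nat
      using that add_mult_distrib2 by force
    from this[OF ballot absorb] show ?thesis
      by (simp only: n_def)
  qed
  then have "catalan m = card (ballot_words m m) * (m + 1) div (m + 1)"
    by (simp only: catalan_def)
  also have "\<dots> = card (ballot_words m m)"
    by (rule nonzero_mult_div_cancel_right) simp
  finally show ?thesis
    by (rule sym)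
qed

lemma card_permutations_of_set_dyck:
  assumes "finite S" "card {x \<in> S. P x} = n" "card {x \<in> S. \<not> P x} = n"
  shows "card {c \<in> permutations_of_set S. dyck_word (map P c)} = catalan n * fact n ^ 2"
proof -
  have "{p. opens p = n \<and> closes p = n \<and> dyck_word p} = ballot_words n n"
    by (auto simp: ballot_words_def dyck_word_iff_ballot)
  then show ?thesis
    using card_permutations_of_set_split[of S "dyck_word" P "\<lambda>_. True" "\<lambda>_. True"] assms
    by (simp add: card_ballot_words_diag power2_eq_square)
qed

lemma card_permutations_of_set_dyck_kinds:
  assumes "k \<noteq> k'"
  shows "card {c \<in> permutations_of_set ({k, k'} \<times> {..<n}). dyck_word (map (\<lambda>x. fst x = k) c)}
    = catalan n * fact n ^ 2"
proof (rule card_permutations_of_set_dyck)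
  have "{x \<in> {k, k'} \<times> {..<n}. fst x = k} = {k} \<times> {..<n}"
    by auto
  then show "card {x \<in> {k, k'} \<times> {..<n}. fst x = k} = n"
    by (simp add: card_cartesian_product)
  have "{x \<in> {k, k'} \<times> {..<n}. fst x \<noteq> k} = {k'} \<times> {..<n}"
    using assms by auto
  then show "card {x \<in> {k, k'} \<times> {..<n}. fst x \<noteq> k} = n"
    by (simp add: card_cartesian_product)
qed simp

definition o_operator :: "opkind \<times> nat \<Rightarrow> bool" where
  "o_operator x \<longleftrightarrow> fst x = OCre \<or> fst x = OAnn"

lemma orderings_eq_permutations_of_set: "orderings no nv = permutations_of_set (operators no nv)"
  by (auto simp: orderings_def permutations_of_set_def)

lemma operators_eq: "operators no nv = {OCre, OAnn} \<times> {..<no} \<union> {VAnn, VCre} \<times> {..<nv}"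
  by (auto simp: operators_def)

lemma finite_operators: "finite (operators no nv)"
  by (simp add: operators_eq)

lemma o_operators_eq: "{x \<in> operators no nv. o_operator x} = {OCre, OAnn} \<times> {..<no}"
  by (auto simp: operators_eq o_operator_def)

lemma v_operators_eq: "{x \<in> operators no nv. \<not> o_operator x} = {VAnn, VCre} \<times> {..<nv}"
  by (auto simp: operators_eq o_operator_def)

lemma o_word_filter_o_operator [simp]: "o_word (filter o_operator c) = o_word c"
  by (simp add: o_word_def o_operator_def)

lemma v_word_filter_not_o_operator [simp]: "v_word (filter (\<lambda>x. \<not> o_operator x) c) = v_word c"
proof -
  have "filter (\<lambda>x. fst x = VCre \<or> fst x = VAnn) (filter (\<lambda>x. \<not> o_operator x) c)
      = filter (\<lambda>x. fst x = VCre \<or> fst x = VAnn) c"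
    unfolding filter_filter by (rule filter_cong) (auto simp: o_operator_def)
  then show ?thesis
    by (simp only: v_word_def)
qed

lemma card_dyck_o_chains:
  "card {c \<in> permutations_of_set ({OCre, OAnn} \<times> {..<n}). dyck_word (o_word c)}
    = catalan n * fact n ^ 2"
proof -
  have "o_word c = map (\<lambda>x. fst x = OCre) c"
    if "c \<in> permutations_of_set ({OCre, OAnn} \<times> {..<n})" for c
    using that unfolding o_word_def by (subst filter_True) (auto simp: permutations_of_set_def)
  then have "{c \<in> permutations_of_set ({OCre, OAnn} \<times> {..<n}). dyck_word (o_word c)}
      = {c \<in> permutations_of_set ({OCre, OAnn} \<times> {..<n}). dyck_word (map (\<lambda>x. fst x = OCre) c)}"
    by auto
  then show ?thesis
    by (simp add: card_permutations_of_set_dyck_kinds)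
qed

lemma card_dyck_v_chains:
  "card {c \<in> permutations_of_set ({VAnn, VCre} \<times> {..<n}). dyck_word (v_word c)}
    = catalan n * fact n ^ 2"
proof -
  have "v_word c = map (\<lambda>x. fst x = VAnn) c"
    if "c \<in> permutations_of_set ({VAnn, VCre} \<times> {..<n})" for c
    using that unfolding v_word_def by (subst filter_True) (auto simp: permutations_of_set_def)
  then have "{c \<in> permutations_of_set ({VAnn, VCre} \<times> {..<n}). dyck_word (v_word c)}
      = {c \<in> permutations_of_set ({VAnn, VCre} \<times> {..<n}). dyck_word (map (\<lambda>x. fst x = VAnn) c)}"
    by auto
  then show ?thesis
    by (simp add: card_permutations_of_set_dyck_kinds)
qed

theorem mainTheorem2:
  fixes no nv :: nat
  shows "card {c \<in> orderings no nv. admissible c} =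
    catalan no * catalan nv * ((2 * no + 2 * nv) choose (2 * no))
      * (fact no)^2 * (fact nv)^2"
proof -
  have "card {c \<in> orderings no nv. admissible c}
      = card {p. opens p = 2 * no \<and> closes p = 2 * nv}
        * card {c \<in> permutations_of_set ({OCre, OAnn} \<times> {..<no}). dyck_word (o_word c)}
        * card {c \<in> permutations_of_set ({VAnn, VCre} \<times> {..<nv}). dyck_word (v_word c)}"
    using card_permutations_of_set_split[of "operators no nv" "\<lambda>_. True" o_operator
        "\<lambda>c. dyck_word (o_word c)" "\<lambda>c. dyck_word (v_word c)"]
    by (simp add: orderings_eq_permutations_of_set admissible_def o_operators_eq v_operators_eq
        card_cartesian_product finite_operators mult_2)
  then show ?thesis
    by (simp add: card_bool_lists_count card_dyck_o_chains card_dyck_v_chains)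
qed

end
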